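(* Let $\mathfrak g$ be a finite-dimensional two-step solvable Lie algebra over a field of characteristic zero with $\mathfrak g^\infty=\mathfrak g^3$. Then $\mathfrak g$ admits an LR-structure.
   Context: Two-step solvable means $[[\mathfrak g,\mathfrak g],[\mathfrak g,\mathfrak g]]=0$. Lower central series: $\mathfrak g^1=\mathfrak g$, $\mathfrak g^{i+1}=[\mathfrak g,\mathfrak g^i]$, $\mathfrak g^\infty=\bigcap_i\mathfrak g^i$. An LR-structure on a Lie algebra $\mathfrak g$ is a bilinear product $\cdot$ on its underlying space with $x\cdot(y\cdot z)=y\cdot(x\cdot z)$, $(x\cdot y)\cdot z=(x\cdot z)\cdot y$ and $x\cdot y-y\cdot x=[x,y]$ for all $x,y,z$. *)

theory Defs
  imports Complex_Main
begin

definition bilinear_map :: "('k::field \<Rightarrow> 'v::ab_group_add \<Rightarrow> 'v) \<Rightarrow> ('v \<Rightarrow> 'v \<Rightarrow> 'v) \<Rightarrow> bool" where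
  "bilinear_map scale f \<longleftrightarrow>
     (\<forall>x. Vector_Spaces.linear scale scale (f x)) \<and> (\<forall>y. Vector_Spaces.linear scale scale (\<lambda>x. f x y))"

definition lie_algebra :: "('k::field \<Rightarrow> 'v::ab_group_add \<Rightarrow> 'v) \<Rightarrow> ('v \<Rightarrow> 'v \<Rightarrow> 'v) \<Rightarrow> bool" where
  "lie_algebra scale br \<longleftrightarrow>
     vector_space scale \<and> bilinear_map scale br \<and> (\<forall>x. br x x = 0) \<and>
     (\<forall>x y z. br x (br y z) + br y (br z x) + br z (br x y) = 0)"

definition finite_dim :: "('k::field \<Rightarrow> 'v::ab_group_add \<Rightarrow> 'v) \<Rightarrow> bool" where
  "finite_dim scale \<longleftrightarrow> (\<exists>B. finite_dimensional_vector_space scale B)"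

text \<open>Lower central series: g^1 = g, g^(i+1) = [g, g^i] (linear span of brackets).
  The index 0 is given the value g as well (unused convention).\<close>

fun lower_central :: "('k::field \<Rightarrow> 'v::ab_group_add \<Rightarrow> 'v) \<Rightarrow> ('v \<Rightarrow> 'v \<Rightarrow> 'v) \<Rightarrow> nat \<Rightarrow> 'v set" where
  "lower_central scale br 0 = UNIV"
| "lower_central scale br (Suc 0) = UNIV"
| "lower_central scale br (Suc (Suc n)) =
     module.span scale {br x y | x y. y \<in> lower_central scale br (Suc n)}"

definition lower_central_inf :: "('k::field \<Rightarrow> 'v::ab_group_add \<Rightarrow> 'v) \<Rightarrow> ('v \<Rightarrow> 'v \<Rightarrow> 'v) \<Rightarrow> 'v set" where
  "lower_central_inf scale br = (\<Inter>i\<in>{1..}. lower_central scale br i)"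

definition derived_algebra :: "('k::field \<Rightarrow> 'v::ab_group_add \<Rightarrow> 'v) \<Rightarrow> ('v \<Rightarrow> 'v \<Rightarrow> 'v) \<Rightarrow> 'v set" where
  "derived_algebra scale br = module.span scale {br x y | x y. True}"

definition two_step_solvable :: "('k::field \<Rightarrow> 'v::ab_group_add \<Rightarrow> 'v) \<Rightarrow> ('v \<Rightarrow> 'v \<Rightarrow> 'v) \<Rightarrow> bool" where
  "two_step_solvable scale br \<longleftrightarrow>
     (\<forall>x\<in>derived_algebra scale br. \<forall>y\<in>derived_algebra scale br. br x y = 0)"

definition is_LR_structure :: "('k::field \<Rightarrow> 'v::ab_group_add \<Rightarrow> 'v) \<Rightarrow> ('v \<Rightarrow> 'v \<Rightarrow> 'v) \<Rightarrow> ('v \<Rightarrow> 'v \<Rightarrow> 'v) \<Rightarrow> bool" where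
  "is_LR_structure scale br p \<longleftrightarrow>
     bilinear_map scale p \<and>
     (\<forall>x y z. p x (p y z) = p y (p x z)) \<and>
     (\<forall>x y z. p (p x y) z = p (p x z) y) \<and>
     (\<forall>x y. p x y - p y x = br x y)"

end

theory Submission
  imports Defs
begin

(*
  Let g be a Lie algebra (over a field of characteristic different from 2) whose derived
  algebra A = [g,g] is abelian.  Then the operators ad x
  commute with each other on A, so A is a module over a commutative algebra of operators.

  A splitting of g is a pair (p, h): p is a g-equivariant idempotent linear map on A, and
  h : g -> p(A) is linear with p[y,z] = [y, h z] - [z, h y], i.e. the cocycle p o [-,-]
  is the coboundary of h.  Its residual is K = A \<inter> ker p.
  (1) Starting from (0, 0): as long as some ad x is not nilpotent on K, the Fitting one-component
      of ad x on K can be split off, which gives a splitting with strictly smaller residual.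
      By induction on dim K there is a splitting on whose residual every ad x is nilpotent.
  (2) If moreover g^3 = g^4, the subspace S = [g,K] satisfies S \<subseteq> [g,S]; a Nakayama-type
      lemma for finitely many commuting nilpotent operators then gives S = 0, so K is central.
  (3) A splitting with central residual together with a linear complement of A yields linear
      maps B, Q with [x,y] = [Bx,By] + [Bx,Qy] + [Qx,By]; then x.y = 1/2 [Bx,By] + [Bx,Qy]
      is an LR-structure (characteristic different from 2 suffices).
*)

section \<open>Linear algebra\<close>

abbreviation (in vector_space) linear_endo :: "('b \<Rightarrow> 'b) \<Rightarrow> bool" where
  "linear_endo f \<equiv> Vector_Spaces.linear scale scale f"

sublocale vector_space \<subseteq> endo: vector_space_pair scale scale by unfold_locales

lemma funpow_in_invariant: "(\<forall>v\<in>K. T v \<in> K) \<Longrightarrow> v \<in> K \<Longrightarrow> (T ^^ k) v \<in> K"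
  by (induction k) auto

lemma commute_funpow:
  assumes "\<forall>v\<in>K. T v \<in> K" "\<forall>v\<in>K. D (T v) = T (D v)" "v \<in> K"
  shows "D ((T ^^ k) v) = (T ^^ k) (D v)"
  using assms by (induction k) (simp_all add: funpow_in_invariant)

lemma commute_preserves_power_image:
  assumes "\<forall>v\<in>K. T v \<in> K" "\<forall>v\<in>K. D v \<in> K \<and> D (T v) = T (D v)" "w \<in> (T ^^ k) ` K"
  shows "D w \<in> (T ^^ k) ` K"
proof -
  obtain u where u: "u \<in> K" "w = (T ^^ k) u" using assms(3) by blast
  then have "D w = (T ^^ k) (D u)" using commute_funpow[OF assms(1)] assms(2) by simp
  then show ?thesis using u(1) assms(2) by blast
qed

context vector_space begin

lemma linear_endo_comp: "linear_endo f \<Longrightarrow> linear_endo g \<Longrightarrow> linear_endo (\<lambda>x. f (g x))"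
  using Vector_Spaces.linear_compose[of scale scale g scale f] by (simp add: comp_def)

lemma linear_endo_funpow: "linear_endo f \<Longrightarrow> linear_endo (f ^^ k)"
  by (induction k) (simp_all add: linear_id Vector_Spaces.linear_compose)

lemma nilpotent_span_absorb:
  assumes S: "subspace S" and R: "subspace R" and T: "linear_endo T" "\<forall>r\<in>R. T r \<in> R"
    and nil: "\<forall>v\<in>S. (T ^^ k) v = 0" and spanning: "S \<subseteq> span (T ` S \<union> R)"
  shows "S \<subseteq> R"
proof -
  have split: "\<exists>s'\<in>S. \<exists>b\<in>R. s = T s' + b" if "s \<in> S" for s
  proof -
    have image_span: "span (T ` S) = T ` S"
      using endo.linear_subspace_image[OF T(1) S] by (rule span_eq_iff[THEN iffD2])
    have R_span: "span R = R" using R by (rule span_eq_iff[THEN iffD2])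
    show ?thesis using that spanning unfolding span_Un image_span R_span by blast
  qed
  have decompose: "\<exists>r\<in>R. \<exists>s\<in>S. v = r + (T ^^ j) s" if v: "v \<in> S" for v j
  proof (induction j)
    case 0
    show ?case using v R subspace_0 by force
  next
    case (Suc j)
    then obtain r s where rs: "r \<in> R" "s \<in> S" "v = r + (T ^^ j) s" by blast
    then obtain s' b where s'b: "s' \<in> S" "b \<in> R" "s = T s' + b" using split by blast
    have "(T ^^ j) s = (T ^^ Suc j) s' + (T ^^ j) b"
      using s'b(3) endo.linear_add[OF linear_endo_funpow[OF T(1)]]
      by (simp add: funpow_Suc_right del: funpow.simps)
    then have "v = (r + (T ^^ j) b) + (T ^^ Suc j) s'" using rs(3) by (simp add: ac_simps)
    moreover have "r + (T ^^ j) b \<in> R"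
      using rs(1) funpow_in_invariant[OF T(2) s'b(2)] R subspace_add by blast
    ultimately show ?case using s'b(1) by blast
  qed
  show ?thesis
  proof
    fix v assume "v \<in> S"
    then obtain r s where "r \<in> R" "s \<in> S" "v = r + (T ^^ k) s" using decompose by blast
    then show "v \<in> R" using nil by simp
  qed
qed

lemma commuting_nilpotent_span_zero:
  assumes "finite F" and S: "subspace S"
    and lin: "\<forall>b\<in>F. linear_endo (T b)" and inv: "\<forall>b\<in>F. \<forall>v\<in>S. T b v \<in> S"
    and comm: "\<forall>a\<in>F. \<forall>b\<in>F. \<forall>v\<in>S. T a (T b v) = T b (T a v)"
    and nil: "\<forall>b\<in>F. \<exists>k. \<forall>v\<in>S. (T b ^^ k) v = 0"
    and spanning: "S \<subseteq> span (\<Union>b\<in>F. T b ` S)"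
  shows "S \<subseteq> {0}"
  using assms(1) lin inv comm nil spanning
proof (induction F rule: finite_induct)
  case (insert x F)
  define R where "R = span (\<Union>b\<in>F. T b ` S)"
  have lin_x: "linear_endo (T x)" using insert.prems(1) by simp
  have R_inv: "T x r \<in> R" if "r \<in> R" for r
  proof -
    have "T x ` (\<Union>b\<in>F. T b ` S) \<subseteq> (\<Union>b\<in>F. T b ` S)"
    proof
      fix w assume "w \<in> T x ` (\<Union>b\<in>F. T b ` S)"
      then obtain b s where bs: "b \<in> F" "s \<in> S" "w = T x (T b s)" by blast
      then have "w = T b (T x s)" using insert.prems(3) by blast
      moreover have "T x s \<in> S" using insert.prems(2) bs(2) by simp
      ultimately show "w \<in> (\<Union>b\<in>F. T b ` S)" using bs(1) by blast
    qed
    then have "span (T x ` (\<Union>b\<in>F. T b ` S)) \<subseteq> R" unfolding R_def by (rule span_mono)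
    moreover have "T x r \<in> span (T x ` (\<Union>b\<in>F. T b ` S))"
      using that unfolding R_def endo.linear_span_image[OF lin_x] by blast
    ultimately show ?thesis by blast
  qed
  obtain k where "\<forall>v\<in>S. (T x ^^ k) v = 0" using insert.prems(4) by blast
  moreover have "S \<subseteq> span (T x ` S \<union> R)"
  proof -
    have "(\<Union>b\<in>F. T b ` S) \<subseteq> R" unfolding R_def by (rule span_superset)
    then have "(\<Union>b\<in>insert x F. T b ` S) \<subseteq> T x ` S \<union> R" by auto
    from subset_trans[OF insert.prems(5) span_mono[OF this]] show ?thesis .
  qed
  moreover have "subspace R" unfolding R_def by simp
  ultimately have "S \<subseteq> R" using nilpotent_span_absorb[OF S _ lin_x] R_inv by blast
  then show ?case
    using insert.prems unfolding R_def by (intro insert.IH) blast+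
qed simp

lemma subspace_complement:
  assumes A: "subspace A"
  obtains P where "linear_endo P" "\<forall>v\<in>A. P v = 0" "\<forall>v. v - P v \<in> A"
proof -
  obtain Ba where Ba: "Ba \<subseteq> A" "independent Ba" "A \<subseteq> span Ba"
    by (rule basis_exists[of A])
  obtain B where B: "Ba \<subseteq> B" "independent B" "UNIV \<subseteq> span B"
    by (rule maximal_independent_subset_extend[of Ba UNIV]) (use Ba(2) in auto)
  obtain P where P: "linear_endo P" "\<forall>b\<in>B. P b = (if b \<in> Ba then 0 else b)"
    using endo.linear_independent_extend[OF B(2), of "\<lambda>b. if b \<in> Ba then 0 else b"] by blast
  have "P b = 0" if "b \<in> Ba" for b using that B(1) P(2) by auto
  then have "P v = 0" if "v \<in> A" for v
    using endo.linear_eq_on[OF P(1) endo.linear_zero, of v Ba] that Ba(3) by blast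
  moreover have "v - P v \<in> A" for v
  proof -
    have lin: "linear_endo (\<lambda>v. v - P v)" by (rule endo.linear_compose_sub[OF linear_ident P(1)])
    have "b - P b \<in> A" if "b \<in> B" for b
      using that P(2) Ba(1) A subspace_0 by (cases "b \<in> Ba") auto
    then have "(\<lambda>v. v - P v) ` B \<subseteq> A" by blast
    then have "span ((\<lambda>v. v - P v) ` B) \<subseteq> A" using span_minimal A by blast
    then show ?thesis using B(3) endo.linear_span_image[OF lin, of B] by auto
  qed
  ultimately show thesis using that P(1) by blast
qed

text \<open>Fitting data of an operator T on K: q is a linear idempotent of K onto a part of K on
  which T is invertible with inverse S, and both q and S commute with every operator D that
  preserves K and commutes with T there.\<close>

definition fitting_projection ::
    "'b set \<Rightarrow> ('b \<Rightarrow> 'b) \<Rightarrow> ('b \<Rightarrow> 'b) \<Rightarrow> ('b \<Rightarrow> 'b) \<Rightarrow> bool" where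
  "fitting_projection K T q S \<longleftrightarrow>
     linear_endo q \<and> linear_endo S \<and>
     (\<forall>v\<in>K. q v \<in> K \<and> q (q v) = q v) \<and>
     (\<forall>w\<in>K. q w = w \<longrightarrow> S w \<in> K \<and> q (S w) = S w \<and> T (S w) = w \<and> S (T w) = w) \<and>
     (\<forall>D. (\<forall>v\<in>K. D v \<in> K \<and> D (T v) = T (D v)) \<longrightarrow>
        (\<forall>v\<in>K. q (D v) = D (q v)) \<and> (\<forall>w\<in>K. q w = w \<longrightarrow> S (D w) = D (S w)))"

end

context finite_dimensional_vector_space begin

lemma linear_onto_imp_inj_on:
  assumes f: "linear_endo f" and I: "subspace I" and fI: "f ` I = I"
  shows "inj_on f I"
proof -
  obtain B where B: "B \<subseteq> I" "independent B" "I \<subseteq> span B" "card B = dim I"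
    using basis_exists by blast
  have fin: "finite B" using B(2) finiteI_independent by blast
  have spB: "span B = I" using B span_minimal[OF B(1) I] by auto
  have spfB: "span (f ` B) = I" using endo.linear_span_image[OF f] spB fI by simp
  have fBI: "f ` B \<subseteq> I" using B(1) fI by auto
  have "dim I \<le> card (f ` B)"
    by (rule span_card_ge_dim) (use fBI spfB fin in auto)
  with card_image_le[OF fin, of f] have ceq: "card (f ` B) = card B" using B(4) by simp
  have inj: "inj_on f B" using eq_card_imp_inj_on[OF fin ceq] .
  have ind: "independent (f ` B)"
    using card_eq_dim[of "f ` B" I] fBI ceq B(4) fin spfB by auto
  show ?thesis
  proof (rule inj_onI)
    fix x y assume xy: "x \<in> I" "y \<in> I" "f x = f y"
    have "f (x - y) = 0" using xy endo.linear_diff[OF f] by simp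
    moreover have "x - y \<in> span B" using xy spB I subspace_diff by blast
    ultimately have "x - y = 0"
      using endo.linear_indep_image_lemma[OF f fin ind inj] by blast
    then show "x = y" by simp
  qed
qed

lemma stable_power_image:
  assumes K: "subspace K" and T: "linear_endo T" "\<forall>v\<in>K. T v \<in> K"
  obtains k where "T ` ((T ^^ k) ` K) = (T ^^ k) ` K"
proof -
  define d where "d k = dim ((T ^^ k) ` K)" for k
  obtain k where k: "d k = (LEAST m. \<exists>k. d k = m)" using LeastI_ex[of "\<lambda>m. \<exists>k. d k = m"] by blast
  have kmin: "d k \<le> d j" for j unfolding k by (rule Least_le) auto
  have img: "T ` ((T ^^ k) ` K) = (T ^^ Suc k) ` K" by (simp add: image_comp)
  have "(T ^^ Suc k) ` K = (T ^^ k) ` K"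
  proof (rule subspace_dim_equal)
    show "subspace ((T ^^ Suc k) ` K)" "subspace ((T ^^ k) ` K)"
      using endo.linear_subspace_image[OF linear_endo_funpow[OF T(1)] K] by blast+
    show "(T ^^ Suc k) ` K \<subseteq> (T ^^ k) ` K"
      using T(2) by (auto simp: funpow_Suc_right simp del: funpow.simps)
    show "dim ((T ^^ k) ` K) \<le> dim ((T ^^ Suc k) ` K)" using kmin[of "Suc k"] by (simp add: d_def)
  qed
  with img show thesis using that by simp
qed

lemma stable_image_inverses:
  assumes K: "subspace K" and T: "linear_endo T" "\<forall>v\<in>K. T v \<in> K"
    and stable: "T ` ((T ^^ k) ` K) = (T ^^ k) ` K"
  obtains q S where "linear_endo q" "linear_endo S" "inj_on (T ^^ k) ((T ^^ k) ` K)"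
    "\<forall>v\<in>K. q v \<in> (T ^^ k) ` K \<and> (T ^^ k) (q v) = (T ^^ k) v"
    "\<forall>w\<in>(T ^^ k) ` K. q w = w \<and> S w \<in> (T ^^ k) ` K \<and> S (T w) = w \<and> T (S w) = w"
proof -
  define R where "R = T ^^ k"
  define I where "I = R ` K"
  have R: "linear_endo R" unfolding R_def by (rule linear_endo_funpow[OF T(1)])
  have I: "subspace I" unfolding I_def by (rule endo.linear_subspace_image[OF R K])
  have TI: "T ` I = I" using stable by (simp add: I_def R_def)
  have "(T ^^ j) ` I = I" for j
  proof (induction j)
    case (Suc j)
    have "(T ^^ Suc j) ` I = T ` ((T ^^ j) ` I)" by (simp add: image_comp)
    then show ?case using Suc TI by simp
  qed simp
  then have RI: "R ` I = I" unfolding R_def .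
  have inj_R: "inj_on R I" by (rule linear_onto_imp_inj_on[OF R I RI])
  obtain S where S: "S ` UNIV \<subseteq> I" "linear_endo S" "\<forall>v\<in>I. S (T v) = v"
    using endo.linear_exists_left_inverse_on[OF T(1) I linear_onto_imp_inj_on[OF T(1) I TI]]
    by blast
  obtain G where G: "linear_endo G" "\<forall>v\<in>I. G (R v) = v"
    using endo.linear_exists_left_inverse_on[OF R I inj_R] by blast
  define q where "q v = G (R v)" for v
  have lq: "linear_endo q" unfolding q_def by (rule linear_endo_comp[OF G(1) R])
  have on_K: "\<forall>v\<in>K. q v \<in> I \<and> R (q v) = R v"
  proof
    fix v assume "v \<in> K"
    then have "R v \<in> R ` I" using RI unfolding I_def by blast
    then obtain u where "u \<in> I" "R v = R u" by blast
    then show "q v \<in> I \<and> R (q v) = R v" using G(2) q_def by simp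
  qed
  have on_I: "\<forall>w\<in>I. q w = w \<and> S w \<in> I \<and> S (T w) = w \<and> T (S w) = w"
  proof
    fix w assume "w \<in> I"
    moreover obtain u where "u \<in> I" "w = T u" using \<open>w \<in> I\<close> TI by blast
    ultimately show "q w = w \<and> S w \<in> I \<and> S (T w) = w \<and> T (S w) = w"
      using G(2) S(1,3) q_def by auto
  qed
  from lq S(2) inj_R on_K on_I show thesis unfolding I_def R_def by (rule that)
qed

lemma fitting_projection_exists:
  assumes K: "subspace K" and T: "linear_endo T" "\<forall>v\<in>K. T v \<in> K"
    and not_nil: "\<not> (\<exists>k. \<forall>v\<in>K. (T ^^ k) v = 0)"
  obtains q S where "fitting_projection K T q S" "\<exists>v\<in>K. q v \<noteq> 0"
proof -
  obtain k where stable: "T ` ((T ^^ k) ` K) = (T ^^ k) ` K"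
    using stable_power_image[OF K T] by blast
  define R where "R = T ^^ k"
  define I where "I = R ` K"
  obtain q S where lq: "linear_endo q" and lS: "linear_endo S" and inj_R: "inj_on R I"
    and on_K: "\<forall>v\<in>K. q v \<in> I \<and> R (q v) = R v"
    and on_I: "\<forall>w\<in>I. q w = w \<and> S w \<in> I \<and> S (T w) = w \<and> T (S w) = w"
    by (rule stable_image_inverses[OF K T stable, folded R_def, folded I_def])
  have q_on_K: "q v \<in> I" "R (q v) = R v" if "v \<in> K" for v using on_K that by blast+
  have q_on_I: "q w = w" "S w \<in> I" "S (T w) = w" "T (S w) = w" if "w \<in> I" for w
    using on_I that by blast+
  have IK: "I \<subseteq> K" unfolding I_def R_def using funpow_in_invariant[OF T(2)] by blast
  have fixed_in_I: "w \<in> I" if "w \<in> K" "q w = w" for w using q_on_K(1)[OF that(1)] that(2) by simp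
  have "fitting_projection K T q S" unfolding fitting_projection_def
  proof (intro conjI ballI allI impI lq lS)
    fix v assume v: "v \<in> K"
    show "q v \<in> K" using q_on_K(1)[OF v] IK by blast
    show "q (q v) = q v" using q_on_I(1)[OF q_on_K(1)[OF v]] .
  next
    fix w assume "w \<in> K" "q w = w"
    then have wI: "w \<in> I" by (rule fixed_in_I)
    show "S w \<in> K" using q_on_I(2)[OF wI] IK by blast
    show "q (S w) = S w" using q_on_I(1)[OF q_on_I(2)[OF wI]] .
    show "T (S w) = w" "S (T w) = w" using q_on_I(3,4)[OF wI] by simp_all
  next
    fix D assume D: "\<forall>v\<in>K. D v \<in> K \<and> D (T v) = T (D v)"
    have DR: "D (R v) = R (D v)" if "v \<in> K" for v
      unfolding R_def using commute_funpow[OF T(2) _ that] D by blast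
    have DI: "D w \<in> I" if "w \<in> I" for w
      using commute_preserves_power_image[OF T(2) D] that unfolding I_def R_def .
    show "q (D v) = D (q v)" if v: "v \<in> K" for v
    proof -
      have Dv: "D v \<in> K" using D v by blast
      have "R (q (D v)) = D (R (q v))" using q_on_K(2)[OF Dv] DR[OF v] q_on_K(2)[OF v] by simp
      also have "\<dots> = R (D (q v))" using DR q_on_K(1)[OF v] IK by blast
      finally show ?thesis
        using inj_onD[OF inj_R] q_on_K(1)[OF Dv] DI[OF q_on_K(1)[OF v]] by blast
    qed
    show "S (D w) = D (S w)" if "w \<in> K" "q w = w" for w
    proof -
      have wI: "w \<in> I" by (rule fixed_in_I[OF that])
      have SwI: "S w \<in> I" by (rule q_on_I(2)[OF wI])
      have "D w = D (T (S w))" using q_on_I(4)[OF wI] by simp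
      also have "\<dots> = T (D (S w))" using D SwI IK by blast
      finally have "S (D w) = S (T (D (S w)))" by simp
      then show ?thesis using q_on_I(3)[OF DI[OF SwI]] by simp
    qed
  qed
  moreover obtain v where v: "v \<in> K" "R v \<noteq> 0" using not_nil R_def by auto
  then have "q v \<noteq> 0"
    using q_on_K(2)[OF v(1)] endo.linear_0[OF linear_endo_funpow[OF T(1)]] by (auto simp: R_def)
  ultimately show thesis using that v(1) by blast
qed

end

section \<open>Lie algebras with abelian derived algebra\<close>

locale metabelian_lie_algebra = vector_space scale
  for scale :: "'k::field \<Rightarrow> 'v::ab_group_add \<Rightarrow> 'v" +
  fixes br :: "'v \<Rightarrow> 'v \<Rightarrow> 'v"
  assumes br_linear_right: "Vector_Spaces.linear scale scale (br x)"
    and br_linear_left: "Vector_Spaces.linear scale scale (\<lambda>x. br x y)"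
    and br_alternating: "br x x = 0"
    and jacobi: "br x (br y z) + br y (br z x) + br z (br x y) = 0"
    and derived_abelian:
      "u \<in> derived_algebra scale br \<Longrightarrow> v \<in> derived_algebra scale br \<Longrightarrow> br u v = 0"
begin

abbreviation derived :: "'v set" where
  "derived \<equiv> derived_algebra scale br"

lemma br_add_right: "br x (y + z) = br x y + br x z"
  using endo.linear_add[OF br_linear_right] .

lemma br_add_left: "br (x + y) z = br x z + br y z"
  using endo.linear_add[OF br_linear_left] .

lemma br_diff_right: "br x (y - z) = br x y - br x z"
  using endo.linear_diff[OF br_linear_right] .

lemma br_diff_left: "br (x - y) z = br x z - br y z"
  using endo.linear_diff[OF br_linear_left] .

lemma br_zero_right [simp]: "br x 0 = 0"
  using endo.linear_0[OF br_linear_right] .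

lemma br_zero_left [simp]: "br 0 y = 0"
  using endo.linear_0[OF br_linear_left] .

lemma br_antisym: "br y x = - br x y"
proof -
  have "br (x + y) (x + y) = br x x + br x y + (br y x + br y y)"
    by (simp add: br_add_left br_add_right ac_simps)
  then have "br x y + br y x = 0" by (simp add: br_alternating)
  then show ?thesis by (simp add: eq_neg_iff_add_eq_0 add.commute)
qed

lemma derived_subspace: "subspace derived"
  unfolding derived_algebra_def by simp

lemma br_in_derived [simp]: "br x y \<in> derived"
  unfolding derived_algebra_def by (rule span_base) auto

lemma jacobi_ad: "br x (br y z) = br y (br x z) - br z (br x y)"
proof -
  have "br y (br z x) = - br y (br x z)"
    using br_antisym[of x z] endo.linear_neg[OF br_linear_right] by simp
  then show ?thesis using jacobi[of x y z] by (simp add: eq_diff_eq add_eq_0_iff2 algebra_simps)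
qed

text \<open>Since the derived algebra is abelian, all operators ad x commute on it.\<close>

lemma ad_commute: "u \<in> derived \<Longrightarrow> br x (br y u) = br y (br x u)"
  using jacobi_ad[of x y u] derived_abelian[of u "br x y"] br_antisym[of u "br x y"] by simp

lemma equivariant_image_bracket_span:
  assumes \<sigma>: "linear_endo \<sigma>" and eq: "\<And>z u. u \<in> U \<Longrightarrow> \<sigma> (br z u) = br z (\<sigma> u)"
  shows "\<sigma> ` span {br z u | z u. u \<in> U} = span {br z w | z w. w \<in> \<sigma> ` U}"
proof -
  have "\<sigma> ` {br z u | z u. u \<in> U} = {br z w | z w. w \<in> \<sigma> ` U}"
  proof (intro equalityI subsetI)
    fix w assume "w \<in> \<sigma> ` {br z u | z u. u \<in> U}"
    then obtain z u where "u \<in> U" "w = \<sigma> (br z u)" by blast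
    then show "w \<in> {br z w | z w. w \<in> \<sigma> ` U}" using eq by blast
  next
    fix w assume "w \<in> {br z w | z w. w \<in> \<sigma> ` U}"
    then obtain z u where u: "u \<in> U" "w = br z (\<sigma> u)" by blast
    then have "w = \<sigma> (br z u)" using eq by simp
    then show "w \<in> \<sigma> ` {br z u | z u. u \<in> U}" using u(1) by blast
  qed
  then show ?thesis by (simp add: endo.linear_span_image[OF \<sigma>, symmetric])
qed

subsection \<open>Splittings and their residuals\<close>

text \<open>A splitting: p is an ad-equivariant idempotent on the derived algebra A, and the cocycle
  p o [-,-] is the coboundary of a linear map h : g \<rightarrow> p(A).\<close>

definition splitting :: "('v \<Rightarrow> 'v) \<Rightarrow> ('v \<Rightarrow> 'v) \<Rightarrow> bool" where
  "splitting p h \<longleftrightarrow> linear_endo p \<and> linear_endo h \<and>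
     (\<forall>v\<in>derived. p v \<in> derived \<and> p (p v) = p v \<and> (\<forall>y. p (br y v) = br y (p v))) \<and>
     (\<forall>w. h w \<in> derived \<and> p (h w) = h w) \<and>
     (\<forall>y z. p (br y z) = br y (h z) - br z (h y))"

definition residual :: "('v \<Rightarrow> 'v) \<Rightarrow> 'v set" where
  "residual p = {v \<in> derived. p v = 0}"

lemma splittingD:
  assumes "splitting p h"
  shows "linear_endo p" "linear_endo h"
    and "v \<in> derived \<Longrightarrow> p v \<in> derived" "v \<in> derived \<Longrightarrow> p (p v) = p v"
    and "v \<in> derived \<Longrightarrow> p (br y v) = br y (p v)"
    and "h w \<in> derived" "p (h w) = h w" "p (br y z) = br y (h z) - br z (h y)"
  using assms unfolding splitting_def by blast+

lemma splitting_zero: "splitting (\<lambda>v. 0) (\<lambda>v. 0)"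
  unfolding splitting_def using derived_subspace subspace_0 by (simp add: endo.linear_zero)

lemma residual_subspace:
  assumes "splitting p h"
  shows "subspace (residual p)"
  using derived_subspace endo.linear_add[OF splittingD(1)[OF assms]]
    endo.linear_scale[OF splittingD(1)[OF assms]] endo.linear_0[OF splittingD(1)[OF assms]]
  unfolding subspace_def residual_def by auto

lemma residual_ad_invariant:
  "splitting p h \<Longrightarrow> v \<in> residual p \<Longrightarrow> br y v \<in> residual p"
  unfolding residual_def using splittingD(5) by fastforce

lemma residual_part:
  assumes "splitting p h" "v \<in> derived"
  shows "v - p v \<in> residual p"
  using assms derived_subspace subspace_diff splittingD(3,4)[OF assms(1)]
    endo.linear_diff[OF splittingD(1)[OF assms(1)]]
  unfolding residual_def by auto

lemma residual_part_equivariant: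
  assumes "splitting p h" "v \<in> derived"
  shows "br y v - p (br y v) = br y (v - p v)"
  using splittingD(5)[OF assms] by (simp add: br_diff_right)

text \<open>The operators ad y preserve the residual and commute with ad x there; this is what makes
  the Fitting projection of ad x on the residual commute with every ad y.\<close>

lemma ad_commute_on_residual:
  assumes "splitting p h"
  shows "\<forall>v\<in>residual p. br y v \<in> residual p \<and> br y (br x v) = br x (br y v)"
  using residual_ad_invariant[OF assms] ad_commute unfolding residual_def by blast

subsection \<open>Step (1): splitting off Fitting components\<close>

definition fitting_part :: "('v \<Rightarrow> 'v) \<Rightarrow> ('v \<Rightarrow> 'v) \<Rightarrow> 'v \<Rightarrow> 'v" where
  "fitting_part p q v = q (v - p v)"

lemma fitting_part_basic:
  assumes spl: "splitting p h" and fit: "fitting_projection (residual p) (br x) q S"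
  shows "linear_endo (fitting_part p q)"
    and "v \<in> derived \<Longrightarrow> fitting_part p q v \<in> residual p"
    and "v \<in> derived \<Longrightarrow> q (fitting_part p q v) = fitting_part p q v"
    and "v \<in> derived \<Longrightarrow> fitting_part p q (br y v) = br y (fitting_part p q v)"
proof -
  have lq: "linear_endo q" and qK: "\<forall>v\<in>residual p. q v \<in> residual p \<and> q (q v) = q v"
    using fit unfolding fitting_projection_def by blast+
  show "linear_endo (fitting_part p q)"
    using linear_endo_comp[OF lq endo.linear_compose_sub[OF linear_ident splittingD(1)[OF spl]]]
    by (simp add: fitting_part_def[abs_def])
  assume v: "v \<in> derived"
  show "fitting_part p q v \<in> residual p" "q (fitting_part p q v) = fitting_part p q v"
    using qK residual_part[OF spl v] by (simp_all add: fitting_part_def)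
  have "q (br y u) = br y (q u)" if "u \<in> residual p" for u
    using fit ad_commute_on_residual[OF spl] that unfolding fitting_projection_def by blast
  then show "fitting_part p q (br y v) = br y (fitting_part p q v)"
    using residual_part[OF spl v] residual_part_equivariant[OF spl v]
    by (simp add: fitting_part_def)
qed

text \<open>Since ad x is invertible on the Fitting component, the Jacobi identity shows that the
  component of the bracket is the coboundary of S o fitting_part o ad x.\<close>

lemma fitting_part_coboundary:
  assumes spl: "splitting p h" and fit: "fitting_projection (residual p) (br x) q S"
  shows "fitting_part p q (br y z)
    = br y (S (fitting_part p q (br x z))) - br z (S (fitting_part p q (br x y)))"
proof -
  let ?\<pi> = "fitting_part p q"
  note \<pi> = fitting_part_basic[OF spl fit]
  have lS: "linear_endo S"
    and Sx: "\<And>w. w \<in> residual p \<Longrightarrow> q w = w \<Longrightarrow> S (br x w) = w"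
    using fit unfolding fitting_projection_def by blast+
  have Sc: "S (br y w) = br y (S w)" if "w \<in> residual p" "q w = w" for y w
    using fit ad_commute_on_residual[OF spl] that unfolding fitting_projection_def by blast
  have "br y (S (?\<pi> (br x z))) - br z (S (?\<pi> (br x y)))
      = S (?\<pi> (br y (br x z))) - S (?\<pi> (br z (br x y)))"
    using Sc \<pi>(2,3,4) by simp
  also have "\<dots> = S (?\<pi> (br x (br y z)))"
    using endo.linear_diff[OF lS] endo.linear_diff[OF \<pi>(1)] jacobi_ad[of x y z] by simp
  also have "\<dots> = ?\<pi> (br y z)" using \<pi>(2,3,4) Sx by simp
  finally show ?thesis by simp
qed

lemma splitting_refine:
  assumes spl: "splitting p h" and fit: "fitting_projection (residual p) (br x) q S"
  shows "splitting (\<lambda>v. p v + fitting_part p q v) (\<lambda>w. h w + S (fitting_part p q (br x w)))"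
proof -
  let ?\<pi> = "fitting_part p q"
  note p = splittingD[OF spl] and \<pi> = fitting_part_basic[OF spl fit]
  from fit have lS: "linear_endo S"
    and SK: "\<And>w. w \<in> residual p \<Longrightarrow> q w = w \<Longrightarrow> S w \<in> residual p"
    and qS: "\<And>w. w \<in> residual p \<Longrightarrow> q w = w \<Longrightarrow> q (S w) = S w"
    unfolding fitting_projection_def by blast+
  have derivedI: "u + w \<in> derived" if "u \<in> derived" "w \<in> residual p" for u w
    using that derived_subspace subspace_add unfolding residual_def by blast
  have p\<pi>: "v \<in> derived \<Longrightarrow> p (?\<pi> v) = 0" for v using \<pi>(2) residual_def by simp
  have S\<pi>: "S (?\<pi> (br x w)) \<in> residual p" "q (S (?\<pi> (br x w))) = S (?\<pi> (br x w))" for w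
    using SK qS \<pi>(2,3) by simp_all
  show ?thesis unfolding splitting_def
  proof (intro conjI ballI allI)
    show "linear_endo (\<lambda>v. p v + ?\<pi> v)" by (rule endo.linear_compose_add[OF p(1) \<pi>(1)])
    show "linear_endo (\<lambda>w. h w + S (?\<pi> (br x w)))"
      by (intro endo.linear_compose_add[OF p(2)] linear_endo_comp[OF lS]
          linear_endo_comp[OF \<pi>(1) br_linear_right])
    fix v assume v: "v \<in> derived"
    show "p v + ?\<pi> v \<in> derived" using derivedI p(3)[OF v] \<pi>(2)[OF v] by blast
    have "p (p v + ?\<pi> v) = p v" using endo.linear_add[OF p(1)] p(4)[OF v] p\<pi>[OF v] by simp
    then show "p (p v + ?\<pi> v) + ?\<pi> (p v + ?\<pi> v) = p v + ?\<pi> v"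
      using \<pi>(3)[OF v] by (simp add: fitting_part_def)
    fix y
    show "p (br y v) + ?\<pi> (br y v) = br y (p v + ?\<pi> v)"
      using p(5)[OF v] \<pi>(4)[OF v] br_add_right by simp
  next
    fix w
    show "h w + S (?\<pi> (br x w)) \<in> derived" using derivedI p(6) S\<pi> by blast
    have "p (h w + S (?\<pi> (br x w))) = h w"
      using endo.linear_add[OF p(1)] p(7) S\<pi> by (simp add: residual_def)
    then show "p (h w + S (?\<pi> (br x w))) + ?\<pi> (h w + S (?\<pi> (br x w))) = h w + S (?\<pi> (br x w))"
      using S\<pi> by (simp add: fitting_part_def)
  next
    fix y z
    show "p (br y z) + ?\<pi> (br y z) = br y (h z + S (?\<pi> (br x z))) - br z (h y + S (?\<pi> (br x y)))"
      using p(8)[of y z] fitting_part_coboundary[OF spl fit, of y z] by (simp add: br_add_right)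
  qed
qed

lemma residual_refine:
  assumes spl: "splitting p h" and qK: "\<forall>v\<in>residual p. q v \<in> residual p"
  shows "residual (\<lambda>v. p v + fitting_part p q v) = {v \<in> residual p. q v = 0}"
proof (intro set_eqI iffI)
  fix v assume "v \<in> residual (\<lambda>v. p v + fitting_part p q v)"
  then have v: "v \<in> derived" "p v + q (v - p v) = 0" by (auto simp: residual_def fitting_part_def)
  have "p (q (v - p v)) = 0" using qK residual_part[OF spl v(1)] by (simp add: residual_def)
  then have "p (p v + q (v - p v)) = p v"
    using endo.linear_add[OF splittingD(1)[OF spl]] splittingD(4)[OF spl v(1)] by simp
  then have "p v = 0" using v(2) endo.linear_0[OF splittingD(1)[OF spl]] by simp
  then show "v \<in> {v \<in> residual p. q v = 0}" using v by (simp add: residual_def)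
next
  fix v assume "v \<in> {v \<in> residual p. q v = 0}"
  then show "v \<in> residual (\<lambda>v. p v + fitting_part p q v)"
    by (simp add: residual_def fitting_part_def)
qed

subsection \<open>Step (2), algebraic part: the brackets with the residual under g^3 = g^4\<close>

lemma lower_central_3: "lower_central scale br 3 = span {br z u | z u. u \<in> derived}"
  by (simp add: numeral_3_eq_3 derived_algebra_def)

lemma lower_central_4:
  "lower_central scale br 4 = span {br z w | z w. w \<in> lower_central scale br 3}"
  by (simp add: eval_nat_numeral)

text \<open>Applying the equivariant projection 1 - p onto the residual K to g^3 \<subseteq> g^4 shows that
  S = [g,K] satisfies S \<subseteq> [g,S].\<close>

lemma residual_brackets_self_spanning:
  assumes spl: "splitting p h" and g34: "lower_central scale br 3 \<subseteq> lower_central scale br 4"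
  defines "S \<equiv> span {br z u | z u. u \<in> residual p}"
  shows "S \<subseteq> span {br z s | z s. s \<in> S}"
proof -
  define \<sigma> where "\<sigma> v = v - p v" for v
  have l\<sigma>: "linear_endo \<sigma>"
    unfolding \<sigma>_def by (rule endo.linear_compose_sub[OF linear_ident splittingD(1)[OF spl]])
  have \<sigma>_eq: "\<sigma> (br z u) = br z (\<sigma> u)" if "u \<in> derived" for z u
    using residual_part_equivariant[OF spl that] by (simp add: \<sigma>_def)
  have "\<sigma> ` derived = residual p"
    using residual_part[OF spl] by (force simp: \<sigma>_def residual_def)
  then have \<sigma>3: "\<sigma> ` lower_central scale br 3 = S"
    unfolding lower_central_3 S_def using equivariant_image_bracket_span[OF l\<sigma> \<sigma>_eq] by simp
  have "lower_central scale br 3 \<subseteq> derived"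
    unfolding lower_central_3 by (rule span_minimal[OF _ derived_subspace]) auto
  then have "\<sigma> ` lower_central scale br 4 = span {br z w | z w. w \<in> \<sigma> ` lower_central scale br 3}"
    unfolding lower_central_4 by (intro equivariant_image_bracket_span[OF l\<sigma>] \<sigma>_eq) blast
  then show ?thesis using image_mono[OF g34, of \<sigma>] \<sigma>3 by simp
qed

subsection \<open>Step (3): an LR-structure from a splitting with central residual\<close>

text \<open>If the bracket decomposes as [x,y] = [Bx,By] + [Bx,Qy] + [Qx,By] with B killing the
  derived algebra and Q a suitable projection into it, then x.y = 1/2 [Bx,By] + [Bx,Qy] is an
  LR-structure: its products lie in the derived algebra, so they are killed by B.\<close>

lemma LR_structure_of_decomposition:
  assumes char: "(2::'k) \<noteq> 0" and B: "linear_endo B" and Q: "linear_endo Q"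
    and B_derived: "\<forall>a\<in>derived. B a = 0" and Q_derived: "\<forall>x. Q x \<in> derived"
    and Q_BB: "\<forall>x y. Q (br (B x) (B y)) = 0" and Q_BQ: "\<forall>x y. Q (br (B x) (Q y)) = br (B x) (Q y)"
    and decomp: "\<forall>x y. br x y = br (B x) (B y) + br (B x) (Q y) + br (Q x) (B y)"
  shows "is_LR_structure scale br (\<lambda>x y. scale (1/2) (br (B x) (B y)) + br (B x) (Q y))"
    (is "is_LR_structure scale br ?prd")
proof -
  have prd_derived: "?prd x y \<in> derived" for x y
    using derived_subspace subspace_add subspace_scale br_in_derived by blast
  have B_prd: "B (?prd x y) = 0" for x y using B_derived prd_derived by blast
  have Q_prd: "Q (?prd x y) = br (B x) (Q y)" for x y
    using endo.linear_add[OF Q] endo.linear_scale[OF Q] Q_BB Q_BQ by simp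
  have half: "scale (1/2) u + scale (1/2) u = u" for u
  proof -
    have "(1/2::'k) + 1/2 = 1" using char by (simp add: field_simps)
    then show ?thesis using scale_left_distrib[of "1/2" "1/2" u] by simp
  qed
  show ?thesis unfolding is_LR_structure_def bilinear_map_def
  proof (intro conjI allI)
    fix x
    show "linear_endo (?prd x)"
      by (intro endo.linear_compose_add endo.linear_compose_scale_right
          linear_endo_comp[OF br_linear_right] B Q)
  next
    fix y
    show "linear_endo (\<lambda>x. ?prd x y)"
      by (intro endo.linear_compose_add endo.linear_compose_scale_right
          linear_endo_comp[OF br_linear_left] B)
  next
    fix x y z
    show "?prd x (?prd y z) = ?prd y (?prd x z)"
      using ad_commute[OF spec[OF Q_derived, of z]] by (simp add: B_prd Q_prd)
  next
    fix x y z
    show "?prd (?prd x y) z = ?prd (?prd x z) y" by (simp add: B_prd)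
  next
    fix x y
    define s where "s = scale (1/2) (br (B x) (B y))"
    have "?prd y x = - s - br (Q x) (B y)"
      using br_antisym[of "B x" "B y"] br_antisym[of "Q x" "B y"] by (simp add: s_def)
    then have "?prd x y - ?prd y x = (s + s) + br (B x) (Q y) + br (Q x) (B y)"
      by (simp add: s_def[symmetric] algebra_simps)
    also have "\<dots> = br (B x) (B y) + br (B x) (Q y) + br (Q x) (B y)"
      by (simp add: s_def half)
    also have "\<dots> = br x y" by (rule decomp[rule_format, symmetric])
    finally show "?prd x y - ?prd y x = br x y" .
  qed
qed

text \<open>The cocycle condition of a splitting says exactly that p kills the brackets of the
  twisted vectors c - h c.\<close>

lemma splitting_twisted_bracket:
  assumes "splitting p h"
  shows "p (br (c - h c) (d - h d)) = 0"
proof -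
  note p = splittingD[OF assms]
  have "br (c - h c) (d - h d) = br c d - br c (h d) - br (h c) d + br (h c) (h d)"
    by (simp add: br_diff_left br_diff_right)
  moreover have "p (br c (h d)) = br c (h d)" using p(5)[OF p(6)] p(7) by simp
  moreover have "p (br (h c) d) = - br d (h c)"
    using br_antisym[of "h c" d] endo.linear_neg[OF p(1)] p(5)[OF p(6)] p(7) by simp
  moreover have "br (h c) (h d) = 0" using derived_abelian[OF p(6) p(6)] .
  ultimately show ?thesis
    using p(8)[of c d] endo.linear_add[OF p(1)] endo.linear_diff[OF p(1)] by simp
qed

text \<open>A splitting whose residual is central yields such a decomposition: with a complement P of
  the derived algebra, B = (1 - h) P and Q = p (1 - P) + h P; the remaining part
  (1 - p)(1 - P) of x lies in the residual and drops out of all brackets.\<close>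

lemma decomposition_of_central_splitting:
  assumes spl: "splitting p h" and central: "\<And>y v. v \<in> residual p \<Longrightarrow> br y v = 0"
  obtains B Q where "linear_endo B" "linear_endo Q"
    "\<forall>a\<in>derived. B a = 0" "\<forall>x. Q x \<in> derived"
    "\<forall>x y. Q (br (B x) (B y)) = 0" "\<forall>x y. Q (br (B x) (Q y)) = br (B x) (Q y)"
    "\<forall>x y. br x y = br (B x) (B y) + br (B x) (Q y) + br (Q x) (B y)"
proof -
  note p = splittingD[OF spl]
  obtain P where P: "linear_endo P" "\<forall>v\<in>derived. P v = 0" "\<forall>v. v - P v \<in> derived"
    using subspace_complement[OF derived_subspace] by blast
  define B where "B x = P x - h (P x)" for x
  define Q where "Q x = p (x - P x) + h (P x)" for x
  have lB: "linear_endo B"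
    unfolding B_def by (rule endo.linear_compose_sub[OF P(1) linear_endo_comp[OF p(2) P(1)]])
  have lQ: "linear_endo Q" unfolding Q_def
    by (intro endo.linear_compose_add linear_endo_comp[OF p(1)] linear_endo_comp[OF p(2) P(1)]
        endo.linear_compose_sub[OF linear_ident P(1)])
  have B_derived: "B a = 0" if "a \<in> derived" for a
    using P(2) that endo.linear_0[OF p(2)] by (simp add: B_def)
  have Q_derived: "Q x \<in> derived" for x
    unfolding Q_def using p(3) P(3) p(6) derived_subspace subspace_add by blast
  have Q_on_derived: "Q a = p a" if "a \<in> derived" for a
    using P(2) that endo.linear_0[OF p(2)] by (simp add: Q_def)
  have pQ: "p (Q x) = Q x" for x
    unfolding Q_def using endo.linear_add[OF p(1)] p(4)[OF spec[OF P(3)]] p(7) by simp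
  have p_BB: "p (br (B y) (B z)) = 0" for y z
    unfolding B_def by (rule splitting_twisted_bracket[OF spl])
  define Z where "Z x = (x - P x) - p (x - P x)" for x
  have Z_central: "br w (Z x) = 0" "br (Z x) w = 0" for w x
    using central[OF residual_part[OF spl spec[OF P(3)]]] br_antisym[of "Z x" w]
    by (simp_all add: Z_def)
  have recompose: "B x + Q x + Z x = x" for x by (simp add: B_def Q_def Z_def)
  have decomp: "br x y = br (B x) (B y) + br (B x) (Q y) + br (Q x) (B y)" for x y
  proof -
    have "br x y = br (B x + Q x + Z x) (B y + Q y + Z y)" by (simp only: recompose)
    also have "\<dots> = br (B x) (B y) + br (B x) (Q y) + br (Q x) (B y)"
      using derived_abelian[OF Q_derived Q_derived]
      by (simp add: br_add_left br_add_right Z_central)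
    finally show ?thesis .
  qed
  show thesis
  proof (rule that[OF lB lQ])
    show "\<forall>x y. Q (br (B x) (B y)) = 0" using Q_on_derived p_BB by simp
    show "\<forall>x y. Q (br (B x) (Q y)) = br (B x) (Q y)"
      using Q_on_derived p(5)[OF Q_derived] pQ by simp
  qed (use B_derived Q_derived decomp in blast)+
qed

end

text \<open>Finite dimension is needed for the induction in step (1) and for the finite family of
  operators ad b, b in a basis, in step (2).\<close>

locale fd_metabelian_lie_algebra =
  metabelian_lie_algebra scale br + finite_dimensional_vector_space scale Basis
  for scale :: "'k::field \<Rightarrow> 'v::ab_group_add \<Rightarrow> 'v" and br :: "'v \<Rightarrow> 'v \<Rightarrow> 'v"
    and Basis :: "'v set"
begin

subsection \<open>Step (1), concluded: a splitting with nilpotent residual\<close>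

lemma splitting_shrink:
  assumes spl: "splitting p h" and not_nil: "\<not> (\<exists>k. \<forall>v\<in>residual p. (br x ^^ k) v = 0)"
  obtains p' h' where "splitting p' h'" "residual p' \<subset> residual p"
proof -
  have inv: "\<forall>v\<in>residual p. br x v \<in> residual p" using residual_ad_invariant[OF spl] by blast
  obtain q S where fit: "fitting_projection (residual p) (br x) q S"
    and nonzero: "\<exists>v\<in>residual p. q v \<noteq> 0"
    using fitting_projection_exists[OF residual_subspace[OF spl] br_linear_right inv not_nil] .
  have "\<forall>v\<in>residual p. q v \<in> residual p" using fit unfolding fitting_projection_def by blast
  then have "residual (\<lambda>v. p v + fitting_part p q v) = {v \<in> residual p. q v = 0}"
    by (rule residual_refine[OF spl])
  with nonzero have "residual (\<lambda>v. p v + fitting_part p q v) \<subset> residual p" by blast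
  with splitting_refine[OF spl fit] show thesis by (rule that)
qed

lemma nilpotent_splitting_exists:
  obtains p h where "splitting p h" "\<forall>x. \<exists>k. \<forall>v\<in>residual p. (br x ^^ k) v = 0"
proof -
  have "\<exists>p h. splitting p h \<and> (\<forall>x. \<exists>k. \<forall>v\<in>residual p. (br x ^^ k) v = 0)"
    if "splitting p h" for p h
    using that
  proof (induction "dim (residual p)" arbitrary: p h rule: less_induct)
    case less
    show ?case
    proof (cases "\<forall>x. \<exists>k. \<forall>v\<in>residual p. (br x ^^ k) v = 0")
      case True
      then show ?thesis using less.prems by blast
    next
      case False
      then obtain x where "\<not> (\<exists>k. \<forall>v\<in>residual p. (br x ^^ k) v = 0)" by blast
      then obtain p' h' where p': "splitting p' h'" "residual p' \<subset> residual p"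
        using splitting_shrink[OF less.prems] by blast
      have "span (residual p') = residual p'" "span (residual p) = residual p"
        using residual_subspace[OF p'(1)] residual_subspace[OF less.prems]
        by (auto intro: span_eq_iff[THEN iffD2])
      with p'(2) have "span (residual p') \<subset> span (residual p)" by (simp only:)
      then have "dim (residual p') < dim (residual p)" by (rule dim_psubset)
      then show ?thesis using less.hyps p'(1) by blast
    qed
  qed
  then show thesis using splitting_zero that by blast
qed

subsection \<open>Step (2), concluded: the residual is central\<close>

lemma bracket_span_basis: "span {br z s | z s. s \<in> S} \<subseteq> span (\<Union>b\<in>Basis. br b ` S)"
proof (rule span_minimal[OF _ subspace_span], intro subsetI)
  fix w assume "w \<in> {br z s | z s. s \<in> S}"
  then obtain z s where zs: "s \<in> S" "w = br z s" by blast
  have "w \<in> (\<lambda>z. br z s) ` span Basis" using zs span_Basis by auto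
  also have "\<dots> = span ((\<lambda>z. br z s) ` Basis)"
    using endo.linear_span_image[OF br_linear_left] by simp
  also have "\<dots> \<subseteq> span (\<Union>b\<in>Basis. br b ` S)" by (rule span_mono) (use zs in blast)
  finally show "w \<in> span (\<Union>b\<in>Basis. br b ` S)" .
qed

text \<open>If every ad x is nilpotent on the residual K and g^3 = g^4, then S = [g,K] is spanned by
  its images under the commuting nilpotent operators ad b (b in a basis), so S = 0.\<close>

lemma residual_central:
  assumes spl: "splitting p h" and nil: "\<forall>x. \<exists>k. \<forall>v\<in>residual p. (br x ^^ k) v = 0"
    and g34: "lower_central scale br 3 \<subseteq> lower_central scale br 4"
    and v: "v \<in> residual p"
  shows "br y v = 0"
proof -
  let ?K = "residual p"
  define S where "S = span {br z u | z u. u \<in> ?K}"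
  have SK: "S \<subseteq> ?K"
    unfolding S_def using residual_ad_invariant[OF spl] residual_subspace[OF spl]
    by (intro span_minimal) auto
  have ad_S: "br b s \<in> S" if "s \<in> S" for b s
  proof -
    have "br b ` {br z u | z u. u \<in> ?K} \<subseteq> {br z u | z u. u \<in> ?K}"
      using residual_ad_invariant[OF spl] by blast
    then have "span (br b ` {br z u | z u. u \<in> ?K}) \<subseteq> S" unfolding S_def by (rule span_mono)
    then show ?thesis using that unfolding S_def endo.linear_span_image[OF br_linear_right] by blast
  qed
  have "S \<subseteq> {0}"
  proof (rule commuting_nilpotent_span_zero[OF finite_Basis, where T = br])
    show "subspace S" unfolding S_def by (rule subspace_span)
    show "\<forall>b\<in>Basis. linear_endo (br b)" using br_linear_right by blast
    show "\<forall>b\<in>Basis. \<forall>v\<in>S. br b v \<in> S" using ad_S by blast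
    show "\<forall>a\<in>Basis. \<forall>b\<in>Basis. \<forall>v\<in>S. br a (br b v) = br b (br a v)"
      using SK ad_commute unfolding residual_def by blast
    show "\<forall>b\<in>Basis. \<exists>k. \<forall>v\<in>S. (br b ^^ k) v = 0" using nil SK by blast
    show "S \<subseteq> span (\<Union>b\<in>Basis. br b ` S)"
      using residual_brackets_self_spanning[OF spl g34] bracket_span_basis
      unfolding S_def by (rule subset_trans)
  qed
  moreover have "br y v \<in> S" unfolding S_def by (rule span_base) (use v in blast)
  ultimately show ?thesis by blast
qed

theorem LR_structure_exists:
  assumes char: "(2::'k) \<noteq> 0"
    and g34: "lower_central scale br 3 \<subseteq> lower_central scale br 4"
  shows "\<exists>prd. is_LR_structure scale br prd"
proof -
  obtain p h where spl: "splitting p h" and nil: "\<forall>x. \<exists>k. \<forall>v\<in>residual p. (br x ^^ k) v = 0"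
    by (rule nilpotent_splitting_exists)
  obtain B Q where BQ: "linear_endo B" "linear_endo Q"
    "\<forall>a\<in>derived. B a = 0" "\<forall>x. Q x \<in> derived"
    "\<forall>x y. Q (br (B x) (B y)) = 0" "\<forall>x y. Q (br (B x) (Q y)) = br (B x) (Q y)"
    "\<forall>x y. br x y = br (B x) (B y) + br (B x) (Q y) + br (Q x) (B y)"
    using decomposition_of_central_splitting[OF spl residual_central[OF spl nil g34]] by blast
  from LR_structure_of_decomposition[OF char BQ] show ?thesis by blast
qed

end

lemma fd_metabelian_lie_algebraI:
  assumes "lie_algebra scale br" "two_step_solvable scale br"
    and "finite_dimensional_vector_space scale Basis"
  shows "fd_metabelian_lie_algebra scale br Basis"
  using assms
  unfolding fd_metabelian_lie_algebra_def metabelian_lie_algebra_def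
    metabelian_lie_algebra_axioms_def lie_algebra_def bilinear_map_def two_step_solvable_def
  by blast

text \<open>Since g^\<infinity> \<subseteq> g^4, the hypothesis g^\<infinity> = g^3 gives g^3 \<subseteq> g^4, and characteristic zero
  gives 2 \<noteq> 0.\<close>

theorem mainTheorem13:
  fixes scale :: "'k::field_char_0 \<Rightarrow> 'v::ab_group_add \<Rightarrow> 'v"
    and br :: "'v \<Rightarrow> 'v \<Rightarrow> 'v"
  assumes "lie_algebra scale br"
    and "finite_dim scale"
    and "two_step_solvable scale br"
    and "lower_central_inf scale br = lower_central scale br 3"
  shows "\<exists>p. is_LR_structure scale br p"
proof -
  obtain Basis where "finite_dimensional_vector_space scale Basis"
    using assms(2) unfolding finite_dim_def by blast
  then have fd: "fd_metabelian_lie_algebra scale br Basis"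
    using assms(1,3) by (rule fd_metabelian_lie_algebraI[rotated 2])
  have "lower_central_inf scale br \<subseteq> lower_central scale br 4"
    unfolding lower_central_inf_def by (rule INT_lower) simp
  then have "lower_central scale br 3 \<subseteq> lower_central scale br 4" using assms(4) by simp
  then show ?thesis using fd_metabelian_lie_algebra.LR_structure_exists[OF fd] by simp
qed

end
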